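(* If $X$ is a metric space with $\operatorname{trasdim}X<\infty$, then $\operatorname{trasdim}X<\omega_1$, where $\omega_1$ is the first uncountable ordinal.
   Context: A family $\mathcal A$ of subsets of a metric space is uniformly bounded if there is $C>0$ with $\operatorname{diam}A\le C$ for all $A\in\mathcal A$; it is $r$-disjoint if $d(A_1,A_2)\ge r$ for all distinct $A_1,A_2\in\mathcal A$. For a set $L$, $\mathrm{Fin}\,L$ is the collection of finite nonempty subsets of $L$. For $M\subset \mathrm{Fin}\,L$ and $\sigma\in\{\emptyset\}\cup\mathrm{Fin}\,L$, $M^\sigma=\{\tau\in\mathrm{Fin}\,L:\sigma\cup\tau\in M,\ \sigma\cap\tau=\emptyset\}$, and $M^a=M^{\{a\}}$. The ordinal $\operatorname{Ord}M$: $\operatorname{Ord}M=0$ iff $M=\emptyset$; $\operatorname{Ord}M\le\alpha$ iff $\operatorname{Ord}M^a<\alpha$ for every $a\in L$; $\operatorname{Ord}M=\alpha$ iff $\operatorname{Ord}M\le\alpha$ and not $\operatorname{Ord}M<\alpha$; $\operatorname{Ord}M=\infty$ iff $\operatorname{Ord} M\le\alpha$ for no ordinal $\alpha$ ($\infty$ is larger than every ordinal). For a metric space $(X,d)$, $A(X,d)$ is the set of $\sigma\in\mathrm{Fin}\,\mathbb N$ such that there do NOT exist uniformly bounded families $\mathcal V_i$, $i\in\sigma$, with $\bigcup_{i\in\sigma}\mathcal V_i$ covering $X$ and each $\mathcal V_i$ being $i$-disjoint. Define $\operatorname{trasdim}X=\operatorname{Ord}A(X,d)$, except $\operatorname{trasdim}X=-1$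 iff $X$ is bounded. *)

theory Defs
  imports "HOL-Analysis.Analysis"
begin

text \<open>Fin L: finite nonempty subsets of L (here L is the whole type).\<close>
definition Fin :: "'a set set" where
  "Fin = {\<sigma>. finite \<sigma> \<and> \<sigma> \<noteq> {}}"

definition link :: "'a set set \<Rightarrow> 'a set \<Rightarrow> 'a set set" where
  "link M \<sigma> = {\<tau> \<in> Fin. \<sigma> \<union> \<tau> \<in> M \<and> \<sigma> \<inter> \<tau> = {}}"

text \<open>ord_le r M x means Ord M \<le> alpha, where the ordinal alpha is represented
  by the element x of the well-order r (alpha = order type of the strict
  initial segment of r below x). Literally the paper's recursive definition:
  Ord M = 0 iff M is empty, and Ord M \<le> alpha iff Ord M^a < alpha for all a,
  where Ord N < alpha means Ord N \<le> beta for some beta < alpha.\<close>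
inductive ord_le :: "'b rel \<Rightarrow> 'a set set \<Rightarrow> 'b \<Rightarrow> bool" for r :: "'b rel" where
  ord_le_empty: "x \<in> Field r \<Longrightarrow> ord_le r {} x"
| ord_le_step: "x \<in> Field r \<Longrightarrow>
     (\<forall>a. \<exists>y. (y, x) \<in> r \<and> y \<noteq> x \<and> ord_le r (link M {a}) y) \<Longrightarrow> ord_le r M x"

definition unif_bounded :: "('a \<Rightarrow> 'a \<Rightarrow> real) \<Rightarrow> 'a set set \<Rightarrow> bool" where
  "unif_bounded d \<V> \<longleftrightarrow> (\<exists>C>0. \<forall>A\<in>\<V>. \<forall>x\<in>A. \<forall>y\<in>A. d x y \<le> C)"

definition r_disjoint :: "('a \<Rightarrow> 'a \<Rightarrow> real) \<Rightarrow> real \<Rightarrow> 'a set set \<Rightarrow> bool" where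
  "r_disjoint d r \<V> \<longleftrightarrow>
     (\<forall>A1\<in>\<V>. \<forall>A2\<in>\<V>. A1 \<noteq> A2 \<longrightarrow> (\<forall>x\<in>A1. \<forall>y\<in>A2. r \<le> d x y))"

definition asdim_set :: "'a set \<Rightarrow> ('a \<Rightarrow> 'a \<Rightarrow> real) \<Rightarrow> nat set set" where
  "asdim_set X d = {\<sigma> \<in> Fin. \<not> (\<exists>\<V> :: nat \<Rightarrow> 'a set set.
      (\<forall>i\<in>\<sigma>. (\<forall>V\<in>\<V> i. V \<subseteq> X) \<and> unif_bounded d (\<V> i) \<and> r_disjoint d (real i) (\<V> i))
      \<and> X \<subseteq> (\<Union>i\<in>\<sigma>. \<Union>(\<V> i)))}"

end

theory Submission
  imports Defs "HOL-Library.Countable_Set_Type"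
begin

unbundle cardinal_syntax

text \<open>\<open>A(X,d)\<close> is a family of finite subsets of the countable
  set \<open>\<nat>\<close>, and for any such family \<open>M\<close> of ordinal rank the rank is countable: by induction
  on the derivation of \<open>Ord M \<le> \<alpha>\<close>, each of the countably many links \<open>M\<^sup>a\<close> has rank below
  some countable ordinal, and countably many countable ordinals have a strict upper bound
  below \<open>\<omega>\<^sub>1\<close>.\<close>

lemma countable_underS_cardSuc_natLeq:
  assumes "a \<in> Field (cardSuc natLeq)"
  shows "countable (underS (cardSuc natLeq) a)"
proof -
  have "|underS (cardSuc natLeq) a| <o cardSuc natLeq"
    using card_of_underS[OF cardSuc_Card_order[OF natLeq_Card_order] assms] .
  then have "|underS (cardSuc natLeq) a| \<le>o natLeq"
    using cardSuc_ordLeq_ordLess[OF natLeq_Card_order card_of_Card_order] by blast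
  then show ?thesis
    using countable_card_le_natLeq by blast
qed

lemma uncountable_Field_cardSuc_natLeq: "uncountable (Field (cardSuc natLeq))"
proof
  assume "countable (Field (cardSuc natLeq))"
  then have "|Field (cardSuc natLeq)| \<le>o natLeq"
    using countable_card_le_natLeq by blast
  moreover have "|Field (cardSuc natLeq)| =o cardSuc natLeq"
    using card_of_Field_ordIso[OF cardSuc_Card_order[OF natLeq_Card_order]] .
  ultimately have "cardSuc natLeq \<le>o natLeq"
    using ordIso_ordLeq_trans ordIso_symmetric by blast
  then show False
    using cardSuc_greater[OF natLeq_Card_order] not_ordLess_ordLeq by blast
qed

lemma countable_strict_upper_bound_cardSuc_natLeq:
  assumes "countable K" and "K \<subseteq> Field (cardSuc natLeq)"
  shows "\<exists>y \<in> Field (cardSuc natLeq). \<forall>b \<in> K. (b, y) \<in> cardSuc natLeq \<and> b \<noteq> y"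
proof -
  let ?below = "\<Union>b \<in> K. insert b (underS (cardSuc natLeq) b)"
  have "countable ?below"
    using assms by (auto intro: countable_underS_cardSuc_natLeq)
  then have "\<not> Field (cardSuc natLeq) \<subseteq> ?below"
    using uncountable_Field_cardSuc_natLeq countable_subset by blast
  then obtain y where y: "y \<in> Field (cardSuc natLeq)" "y \<notin> ?below"
    by blast
  have total: "total_on (Field (cardSuc natLeq)) (cardSuc natLeq)"
    using cardSuc_Card_order[OF natLeq_Card_order]
    unfolding card_order_on_def well_order_on_def linear_order_on_def by blast
  have "(b, y) \<in> cardSuc natLeq \<and> b \<noteq> y" if "b \<in> K" for b
  proof -
    have "y \<noteq> b" "(y, b) \<notin> cardSuc natLeq"
      using y(2) that by (auto simp: underS_def)
    then show ?thesis
      using total y(1) assms(2) that unfolding total_on_def by blast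
  qed
  then show ?thesis
    using y(1) by blast
qed

lemma ord_le_cardSuc_natLeq:
  fixes M :: "'a::countable set set"
  assumes "ord_le r M x"
  shows "\<exists>y \<in> Field (cardSuc natLeq). ord_le (cardSuc natLeq) M y"
  using assms
proof (induction rule: ord_le.induct)
  case (ord_le_empty x)
  obtain y where "y \<in> Field (cardSuc natLeq)"
    using uncountable_Field_cardSuc_natLeq by (metis countable_empty ex_in_conv)
  then show ?case
    by (blast intro: ord_le.ord_le_empty)
next
  case (ord_le_step x M)
  then have "\<forall>a. \<exists>y. y \<in> Field (cardSuc natLeq) \<and> ord_le (cardSuc natLeq) (link M {a}) y"
    by blast
  then obtain f where f: "\<And>a. f a \<in> Field (cardSuc natLeq)"
      "\<And>a. ord_le (cardSuc natLeq) (link M {a}) (f a)"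
    by metis
  have "countable (range f)" "range f \<subseteq> Field (cardSuc natLeq)"
    using f(1) by auto
  then obtain y where y: "y \<in> Field (cardSuc natLeq)"
      "\<forall>b \<in> range f. (b, y) \<in> cardSuc natLeq \<and> b \<noteq> y"
    by (metis countable_strict_upper_bound_cardSuc_natLeq)
  then have below: "(f a, y) \<in> cardSuc natLeq \<and> f a \<noteq> y" for a
    by blast
  have "ord_le (cardSuc natLeq) M y"
    using y(1) f(2) below by (blast intro: ord_le.ord_le_step)
  then show ?case
    using y(1) by blast
qed

theorem theorem4:
  fixes X :: "'a set" and d :: "'a \<Rightarrow> 'a \<Rightarrow> real"
    and r :: "'b rel" and x :: 'b
  assumes "Metric_space X d"
    and "Well_order r" and "x \<in> Field r"
    and "Metric_space.mbounded X d X \<or> ord_le r (asdim_set X d) x"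
  shows "Metric_space.mbounded X d X \<or>
         (\<exists>y \<in> Field (cardSuc natLeq). ord_le (cardSuc natLeq) (asdim_set X d) y)"
  using assms(4) ord_le_cardSuc_natLeq[of r "asdim_set X d" x] by blast

end
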